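(* Let $\underline{s}=(s_1,\dots,s_d)\in\mathbb{R}_+^d$ with $s_{i+1}\le s_i$ for all $i$, and let $\underline{t},\underline{\bar s},\underline{\bar t}\in\mathbb{R}_+^d$ be likewise non-increasingly ordered. Then the pair $(\underline{s},\underline{t})$ equals the pair $(\underline{\bar s},\underline{\bar t})$ up to reordering, i.e. $(\underline s,\underline t)=(\underline{\bar s},\underline{\bar t})$ or $(\underline s,\underline t)=(\underline{\bar t},\underline{\bar s})$, if and only if both of the following hold: 1. $e_i(\underline s)+e_i(\underline t)=e_i(\underline{\bar s})+e_i(\underline{\bar t})$ for all $i=1,\dots,d$; 2. $\sum_{i+j=k,\;0\le i,j\le d}e_i(\underline s)e_j(\underline t)=\sum_{i+j=k,\;0\le i,j\le d}e_i(\underline{\bar s})e_j(\underline{\bar t})$ for all $k=1,\dots,2d$.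
   Context: For a tuple $x=(x_1,\dots,x_n)$, the elementary symmetric polynomial of degree $k$ is $e_k(x)=\sum_{i_1<i_2<\cdots<i_k}x_{i_1}\cdots x_{i_k}$ for $1\le k\le n$, with $e_0(x)=1$ and $e_k(x)=0$ for $k>n$. *)

theory Defs
  imports Complex_Main
begin

definition esym :: "nat \<Rightarrow> real list \<Rightarrow> real" where
  "esym k xs = (\<Sum>S\<in>{S. S \<subseteq> {..<length xs} \<and> card S = k}. \<Prod>i\<in>S. xs ! i)"

definition ordered_nonneg :: "nat \<Rightarrow> real list \<Rightarrow> bool" where
  "ordered_nonneg d xs \<longleftrightarrow> length xs = d \<and> (\<forall>i<d. 0 \<le> xs ! i)
     \<and> (\<forall>i. Suc i < d \<longrightarrow> xs ! Suc i \<le> xs ! i)"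

end

theory Submission
  imports Defs "HOL-Computational_Algebra.Polynomial" "HOL-Library.Multiset"
begin

text \<open>
  Encode a tuple \<open>x\<close> by its generating polynomial \<open>P\<^sub>x = \<Prod>\<^sub>i (1 + x\<^sub>i X)\<close>, whose
  coefficients are the \<open>e\<^sub>k(x)\<close>. Condition 1 says \<open>P\<^sub>s + P\<^sub>t = P\<^sub>s\<^sub>b + P\<^sub>t\<^sub>b\<close> and
  condition 2 says \<open>P\<^sub>s P\<^sub>t = P\<^sub>s\<^sub>b P\<^sub>t\<^sub>b\<close>. In an integral domain sum and product determine
  an unordered pair, since \<open>(P\<^sub>s - P\<^sub>s\<^sub>b)(P\<^sub>s - P\<^sub>t\<^sub>b) = P\<^sub>s\<^sup>2 - P\<^sub>s(P\<^sub>s + P\<^sub>t) + P\<^sub>s P\<^sub>t = 0\<close>.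
  Finally \<open>P\<^sub>x\<close> determines the multiset of entries of \<open>x\<close>: a nonzero entry \<open>c\<close> occurs
  as often as \<open>-1/c\<close> is a root, and the zero entries account for the degree deficit.
  A non-increasing tuple is determined by its multiset of entries.
\<close>

lemma sum_prod_eq_imp_eq_or_swap:
  fixes p q p' q' :: "'a::idom"
  assumes "p + q = p' + q'" and "p * q = p' * q'"
  shows "(p = p' \<and> q = q') \<or> (p = q' \<and> q = p')"
proof -
  have "(p - p') * (p - q') = p * (p - (p' + q')) + p' * q'"
    by (simp add: algebra_simps)
  also have "\<dots> = p * (p - (p + q)) + p * q"
    using assms by simp
  also have "\<dots> = 0"
    by (simp add: algebra_simps)
  finally have "p = p' \<or> p = q'"
    by simp
  then show ?thesis
    using assms(1) by auto
qed

lemma mset_eq_sorted_rev_imp_eq: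
  fixes xs ys :: "'a::linorder list"
  assumes "mset xs = mset ys" and "sorted (rev xs)" and "sorted (rev ys)"
  shows "xs = ys"
proof -
  have "rev xs = sort (rev ys)"
    using assms by (intro properties_for_sort[symmetric]) simp_all
  also have "\<dots> = rev ys"
    using assms(3) by (simp add: sorted_sort_id)
  finally show ?thesis
    by simp
qed

lemma ordered_nonneg_imp_sorted_rev: "ordered_nonneg d xs \<Longrightarrow> sorted (rev xs)"
  unfolding ordered_nonneg_def sorted_rev_iff_nth_Suc by auto

definition esym_poly :: "'a::comm_semiring_1 list \<Rightarrow> 'a poly" where
  "esym_poly xs = (\<Prod>x\<leftarrow>xs. [:1, x:])"

lemma esym_poly_Nil [simp]: "esym_poly [] = 1"
  and esym_poly_Cons [simp]: "esym_poly (x # xs) = [:1, x:] * esym_poly xs"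
  by (simp_all add: esym_poly_def)

lemma esym_poly_nonzero [simp]: "esym_poly xs \<noteq> (0 :: 'a::idom poly)"
  by (induction xs) (simp_all del: mult_pCons_left)

lemma order_esym_poly:
  fixes c :: "'a::field"
  assumes "c \<noteq> 0"
  shows "order (- 1 / c) (esym_poly xs) = count (mset xs) c"
proof (induction xs)
  case Nil
  show ?case
    by simp
next
  case (Cons x xs)
  have "order (- 1 / c) [:1, x:] = (if x = c then 1 else 0)"
  proof (cases "x = c")
    case True
    have "order (- 1 / c) [:1, c:] = order (- 1 / c) (smult c ([:- (- 1 / c), 1:] ^ 1))"
      using assms by simp
    also have "\<dots> = 1"
      by (simp only: order_smult[OF assms] order_power_n_n)
    finally show ?thesis
      using True by simp
  next
    case False
    then have "poly [:1, x:] (- 1 / c) \<noteq> 0"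
      using assms by (simp add: field_simps)
    then show ?thesis
      using False by (simp add: order_0I)
  qed
  then show ?case
    using Cons by (simp add: order_mult del: mult_pCons_left)
qed

lemma degree_esym_poly:
  "degree (esym_poly xs :: 'a::idom poly) + count (mset xs) 0 = length xs"
  by (induction xs) (simp_all add: degree_mult_eq del: mult_pCons_left)

lemma esym_poly_eq_imp_mset_eq:
  fixes xs ys :: "'a::field list"
  assumes "length xs = length ys" and "esym_poly xs = esym_poly ys"
  shows "mset xs = mset ys"
proof (rule multiset_eqI)
  fix c
  show "count (mset xs) c = count (mset ys) c"
  proof (cases "c = 0")
    case True
    then show ?thesis
      using assms degree_esym_poly[of xs] degree_esym_poly[of ys] by simp
  next
    case False
    then show ?thesis
      using assms(2) order_esym_poly[of c xs] order_esym_poly[of c ys] by simp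
  qed
qed

lemma ordered_nonneg_esym_poly_eq_imp_eq:
  assumes "ordered_nonneg d xs" and "ordered_nonneg d ys" and "esym_poly xs = esym_poly ys"
  shows "xs = ys"
proof (rule mset_eq_sorted_rev_imp_eq)
  show "mset xs = mset ys"
    using assms by (intro esym_poly_eq_imp_mset_eq) (simp_all add: ordered_nonneg_def)
  show "sorted (rev xs)" "sorted (rev ys)"
    using assms by (simp_all add: ordered_nonneg_imp_sorted_rev)
qed

lemma esym_0 [simp]: "esym 0 xs = 1"
proof -
  have "{S. S \<subseteq> {..<length xs} \<and> card S = 0} = {{}}"
    by (auto dest: finite_subset)
  then show ?thesis
    by (simp add: esym_def)
qed

lemma esym_eq_0:
  assumes "length xs < k"
  shows "esym k xs = 0"
proof -
  have "card S \<noteq> k" if "S \<subseteq> {..<length xs}" for S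
    using card_mono[OF finite_lessThan that] assms by simp
  then have "{S. S \<subseteq> {..<length xs} \<and> card S = k} = {}"
    by blast
  then show ?thesis
    unfolding esym_def by (simp only: sum.empty)
qed

lemma prod_monom:
  "finite A \<Longrightarrow> (\<Prod>i\<in>A. monom (f i :: 'a::comm_semiring_1) n) = monom (\<Prod>i\<in>A. f i) (n * card A)"
  by (induction A rule: finite_induct) (simp_all add: mult_monom)

lemma coeff_esym_poly: "coeff (esym_poly xs) k = esym k xs"
proof -
  have "esym_poly xs = (\<Prod>i<length xs. monom (xs ! i) 1 + 1)"
    by (simp add: esym_poly_def prod.list_conv_set_nth atLeast0LessThan monom_Suc monom_0
        one_pCons)
  also have "\<dots> = (\<Sum>S\<in>Pow {..<length xs}. monom (\<Prod>i\<in>S. xs ! i) (card S))"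
    by (simp add: prod_add prod_monom finite_subset)
  finally have "coeff (esym_poly xs) k
      = (\<Sum>S\<in>Pow {..<length xs}. if card S = k then \<Prod>i\<in>S. xs ! i else 0)"
    by (simp add: coeff_sum)
  also have "\<dots> = (\<Sum>S\<in>{S \<in> Pow {..<length xs}. card S = k}. \<Prod>i\<in>S. xs ! i)"
    by (subst sum.inter_filter) auto
  finally show ?thesis
    by (simp add: esym_def Pow_def)
qed

lemma coeff_esym_poly_mult:
  assumes "length a \<le> d" and "length b \<le> d"
  shows "coeff (esym_poly a * esym_poly b) k
    = (\<Sum>(i,j)\<in>{(i,j). i \<le> d \<and> j \<le> d \<and> i + j = k}. esym i a * esym j b)"
proof -
  let ?I = "{i. i \<le> k \<and> i \<le> d \<and> k - i \<le> d}"
  have "coeff (esym_poly a * esym_poly b) k = (\<Sum>i\<le>k. esym i a * esym (k - i) b)"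
    by (simp add: coeff_mult coeff_esym_poly)
  also have "\<dots> = (\<Sum>i\<in>?I. esym i a * esym (k - i) b)"
  proof (rule sum.mono_neutral_right)
    show "\<forall>i\<in>{..k} - ?I. esym i a * esym (k - i) b = 0"
    proof
      fix i
      assume "i \<in> {..k} - ?I"
      then have "length a < i \<or> length b < k - i"
        using assms by auto
      then show "esym i a * esym (k - i) b = 0"
        by (auto simp: esym_eq_0)
    qed
  qed auto
  also have "\<dots> = (\<Sum>(i,j)\<in>(\<lambda>i. (i, k - i)) ` ?I. esym i a * esym j b)"
    by (simp add: sum.reindex inj_on_def)
  also have "(\<lambda>i. (i, k - i)) ` ?I = {(i,j). i \<le> d \<and> j \<le> d \<and> i + j = k}"
    by force
  finally show ?thesis .
qed

lemma poly_eq_iff_coeff_eq_on: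
  assumes "\<And>k. k \<notin> K \<Longrightarrow> coeff p k = coeff q k"
  shows "p = q \<longleftrightarrow> (\<forall>k\<in>K. coeff p k = coeff q k)"
  using assms poly_eq_iff by metis

lemma esym_poly_add_eq_iff:
  assumes "length s = d" "length t = d" "length s' = d" "length t' = d"
  shows "esym_poly s + esym_poly t = esym_poly s' + esym_poly t'
    \<longleftrightarrow> (\<forall>i\<in>{1..d}. esym i s + esym i t = esym i s' + esym i t')"
proof -
  have outside: "coeff (esym_poly s + esym_poly t) k = coeff (esym_poly s' + esym_poly t') k"
    if "k \<notin> {1..d}" for k
    using that assms by (cases "k = 0") (simp_all add: coeff_esym_poly esym_eq_0)
  show ?thesis
    by (subst poly_eq_iff_coeff_eq_on[where K = "{1..d}"]) (fact outside, simp add: coeff_esym_poly)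
qed

lemma esym_poly_mult_eq_iff:
  assumes "length s = d" "length t = d" "length s' = d" "length t' = d"
  shows "esym_poly s * esym_poly t = esym_poly s' * esym_poly t'
    \<longleftrightarrow> (\<forall>k\<in>{1..2*d}.
          (\<Sum>(i,j)\<in>{(i,j). i \<le> d \<and> j \<le> d \<and> i + j = k}. esym i s * esym j t) =
          (\<Sum>(i,j)\<in>{(i,j). i \<le> d \<and> j \<le> d \<and> i + j = k}. esym i s' * esym j t'))"
proof -
  have outside: "coeff (esym_poly s * esym_poly t) k = coeff (esym_poly s' * esym_poly t') k"
    if "k \<notin> {1..2*d}" for k
  proof -
    have "{(i,j). i \<le> d \<and> j \<le> d \<and> i + j = k} = (if k = 0 then {(0, 0)} else {})"
      using that by auto
    then show ?thesis
      using assms by (simp add: coeff_esym_poly_mult[of _ d])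
  qed
  show ?thesis
    by (subst poly_eq_iff_coeff_eq_on[where K = "{1..2*d}"])
      (fact outside, use assms in \<open>simp add: coeff_esym_poly_mult[of _ d]\<close>)
qed

theorem theorem10:
  fixes d :: nat and s t sb tb :: "real list"
  assumes "ordered_nonneg d s" and "ordered_nonneg d t"
    and "ordered_nonneg d sb" and "ordered_nonneg d tb"
  shows "((s, t) = (sb, tb) \<or> (s, t) = (tb, sb)) \<longleftrightarrow>
    ((\<forall>i\<in>{1..d}. esym i s + esym i t = esym i sb + esym i tb) \<and>
     (\<forall>k\<in>{1..2*d}.
        (\<Sum>(i,j)\<in>{(i,j). i \<le> d \<and> j \<le> d \<and> i + j = k}. esym i s * esym j t) =
        (\<Sum>(i,j)\<in>{(i,j). i \<le> d \<and> j \<le> d \<and> i + j = k}. esym i sb * esym j tb)))"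
proof -
  have lengths: "length s = d" "length t = d" "length sb = d" "length tb = d"
    using assms by (simp_all add: ordered_nonneg_def)
  have "(esym_poly s + esym_poly t = esym_poly sb + esym_poly tb \<and>
         esym_poly s * esym_poly t = esym_poly sb * esym_poly tb)
      \<longleftrightarrow> (s, t) = (sb, tb) \<or> (s, t) = (tb, sb)"
  proof
    assume "esym_poly s + esym_poly t = esym_poly sb + esym_poly tb \<and>
        esym_poly s * esym_poly t = esym_poly sb * esym_poly tb"
    then have "(esym_poly s = esym_poly sb \<and> esym_poly t = esym_poly tb) \<or>
        (esym_poly s = esym_poly tb \<and> esym_poly t = esym_poly sb)"
      using sum_prod_eq_imp_eq_or_swap by blast
    then show "(s, t) = (sb, tb) \<or> (s, t) = (tb, sb)"
      using ordered_nonneg_esym_poly_eq_imp_eq assms by blast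
  qed (auto simp: ac_simps)
  then show ?thesis
    using esym_poly_add_eq_iff[OF lengths] esym_poly_mult_eq_iff[OF lengths] by blast
qed

end
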